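(* Let $r\ge2$ be an integer, $m$ a positive integer with $r<2^m$, and $c\ge1$ real. If $z$ is selected uniformly at random from $\{0,1,\dots,r-1\}$, then the probability that $d=\gcd(r,z)$ is $cm$-smooth is at least $$1-\frac{1}{c\log_2(cm)}.$$
   Context: A positive integer is $cm$-smooth if it is not divisible by any prime power greater than $cm$. Convention: $\gcd(r,0)=r$. *)

theory Defs
  imports "HOL-Analysis.Analysis"
begin

definition smooth :: "real \<Rightarrow> nat \<Rightarrow> bool" where
  "smooth B n \<longleftrightarrow> n > 0 \<and>
     (\<forall>p k. prime p \<and> k \<ge> 1 \<and> p ^ k dvd n \<longrightarrow> real (p ^ k) \<le> B)"

end

theory Submission
  imports Defs
begin

text \<open>
  Put B = c m and let k_p be the least exponent with p^k_p > B. If gcd(r, z) is not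
  B-smooth, then p^k_p divides both r and z for some prime p in the set P of primes with
  p^k_p dividing r. Each p^k_p exceeds B, so a union bound over P leaves at most |P| r / B
  bad z. The p^k_p for p in P are coprime divisors of r, hence B^|P| \<le> r < 2^m, i.e.
  |P| < m / log_2 B, and |P| / B < m / (B log_2 B) = 1 / (c log_2 (c m)).
\<close>

lemma prod_prime_powers_dvd:
  fixes x :: "'a :: factorial_semiring_gcd"
  assumes "finite A" "\<And>p. p \<in> A \<Longrightarrow> prime p" "\<And>p. p \<in> A \<Longrightarrow> p ^ f p dvd x"
  shows "(\<Prod>p\<in>A. p ^ f p) dvd x"
  using assms
proof (induction A rule: finite_induct)
  case empty
  then show ?case by simp
next
  case (insert q A)
  have "coprime (q ^ f q) (\<Prod>p\<in>A. p ^ f p)"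
  proof (rule prod_coprime_right)
    fix p assume "p \<in> A"
    with insert have "coprime q p" by (metis insertCI primes_coprime)
    then show "coprime (q ^ f q) (p ^ f p)" by simp
  qed
  with insert show ?case by (simp add: divides_mult)
qed

lemma card_multiples_below:
  fixes q r :: nat
  assumes "q dvd r"
  shows "card {z \<in> {0..<r}. q dvd z} = r div q"
proof (cases "q = 0")
  case True
  with assms show ?thesis by simp
next
  case False
  then have "{z \<in> {0..<r}. q dvd z} = (\<lambda>i. q * i) ` {..<r div q}"
    using assms by (auto elim!: dvdE simp: image_iff)
  then show ?thesis using False by (simp add: card_image inj_on_def)
qed

definition least_power_exceeding :: "real \<Rightarrow> nat \<Rightarrow> nat" where
  "least_power_exceeding B p = (LEAST k. B < real (p ^ k))"

lemma least_power_exceeding: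
  assumes "prime p"
  shows "B < real (p ^ least_power_exceeding B p)"
proof -
  have "1 < real p" using prime_gt_1_nat[OF assms] by simp
  then have "\<exists>k. B < real (p ^ k)" using real_arch_pow[of "real p" B] by simp
  then show ?thesis unfolding least_power_exceeding_def by (rule LeastI_ex)
qed

lemma least_power_exceeding_le:
  "B < real (p ^ k) \<Longrightarrow> least_power_exceeding B p \<le> k"
  unfolding least_power_exceeding_def by (rule Least_le)

lemma least_power_exceeding_pos:
  "B \<ge> 1 \<Longrightarrow> prime p \<Longrightarrow> least_power_exceeding B p > 0"
  using least_power_exceeding[of p B] by (cases "least_power_exceeding B p") auto

lemma not_smooth_imp_least_power_exceeding_dvd:
  assumes "n > 0" "\<not> smooth B n"
  obtains p where "prime p" "p ^ least_power_exceeding B p dvd n"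
proof -
  from assms obtain p k where "prime p" "p ^ k dvd n" "B < real (p ^ k)"
    unfolding smooth_def by (auto simp: not_le)
  moreover from \<open>B < real (p ^ k)\<close> have "p ^ least_power_exceeding B p dvd p ^ k"
    by (intro le_imp_power_dvd least_power_exceeding_le)
  ultimately show ?thesis using that dvd_trans by meson
qed

definition large_power_primes :: "real \<Rightarrow> nat \<Rightarrow> nat set" where
  "large_power_primes B r = {p. prime p \<and> p ^ least_power_exceeding B p dvd r}"

lemma large_power_primes_subset_prime_factors:
  assumes "B \<ge> 1" "r > 0"
  shows "large_power_primes B r \<subseteq> prime_factors r"
proof
  fix p assume "p \<in> large_power_primes B r"
  then have "prime p" "p ^ least_power_exceeding B p dvd r"
    by (auto simp: large_power_primes_def)
  moreover have "p dvd p ^ least_power_exceeding B p"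
    using least_power_exceeding_pos[OF assms(1) \<open>prime p\<close>] by simp
  ultimately show "p \<in> prime_factors r"
    using assms(2) dvd_trans by (auto simp: in_prime_factors_iff)
qed

lemma finite_large_power_primes:
  "B \<ge> 1 \<Longrightarrow> r > 0 \<Longrightarrow> finite (large_power_primes B r)"
  using large_power_primes_subset_prime_factors finite_subset by blast

lemma power_card_large_power_primes_le:
  assumes "B \<ge> 1" "r > 0"
  shows "B ^ card (large_power_primes B r) \<le> real r"
proof -
  let ?P = "large_power_primes B r"
  have "B ^ card ?P \<le> (\<Prod>p\<in>?P. real (p ^ least_power_exceeding B p))"
    using assms(1) least_power_exceeding
    by (subst prod_constant[symmetric], intro prod_mono)
       (auto simp: large_power_primes_def intro: less_imp_le)
  also have "\<dots> = real (\<Prod>p\<in>?P. p ^ least_power_exceeding B p)"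
    by simp
  also have "\<dots> \<le> real r"
  proof -
    have "(\<Prod>p\<in>?P. p ^ least_power_exceeding B p) dvd r"
      using finite_large_power_primes[OF assms]
      by (intro prod_prime_powers_dvd) (auto simp: large_power_primes_def)
    then have "(\<Prod>p\<in>?P. p ^ least_power_exceeding B p) \<le> r"
      using assms(2) by (rule dvd_imp_le)
    then show ?thesis by (simp only: of_nat_le_iff)
  qed
  finally show ?thesis .
qed

lemma card_not_smooth_gcd_le:
  assumes "B \<ge> 1" "r > 0"
  shows "real (card {z \<in> {0..<r}. \<not> smooth B (gcd r z)})
           \<le> real (card (large_power_primes B r)) * real r / B"
proof -
  let ?P = "large_power_primes B r"
  let ?q = "\<lambda>p. p ^ least_power_exceeding B p"
  have fin: "finite ?P" using finite_large_power_primes[OF assms] .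
  have "{z \<in> {0..<r}. \<not> smooth B (gcd r z)} \<subseteq> (\<Union>p\<in>?P. {z \<in> {0..<r}. ?q p dvd z})"
  proof
    fix z assume z: "z \<in> {z \<in> {0..<r}. \<not> smooth B (gcd r z)}"
    then have "gcd r z > 0" "\<not> smooth B (gcd r z)" using assms(2) by auto
    then obtain p where "prime p" "?q p dvd gcd r z"
      by (rule not_smooth_imp_least_power_exceeding_dvd)
    with z show "z \<in> (\<Union>p\<in>?P. {z \<in> {0..<r}. ?q p dvd z})"
      by (auto simp: large_power_primes_def)
  qed
  then have "card {z \<in> {0..<r}. \<not> smooth B (gcd r z)}
               \<le> card (\<Union>p\<in>?P. {z \<in> {0..<r}. ?q p dvd z})"
    using fin by (intro card_mono) auto
  also have "\<dots> \<le> (\<Sum>p\<in>?P. card {z \<in> {0..<r}. ?q p dvd z})"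
    by (rule card_UN_le[OF fin])
  also have "\<dots> = (\<Sum>p\<in>?P. r div ?q p)"
    by (intro sum.cong refl card_multiples_below) (auto simp: large_power_primes_def)
  finally have "real (card {z \<in> {0..<r}. \<not> smooth B (gcd r z)}) \<le> (\<Sum>p\<in>?P. real (r div ?q p))"
    by (simp only: of_nat_le_iff flip: of_nat_sum)
  also have "\<dots> = (\<Sum>p\<in>?P. real r / real (?q p))"
    by (intro sum.cong refl real_of_nat_div) (auto simp: large_power_primes_def)
  also have "\<dots> \<le> (\<Sum>p\<in>?P. real r / B)"
    using assms less_imp_le[OF least_power_exceeding]
    by (intro sum_mono divide_left_mono) (auto simp: large_power_primes_def)
  finally show ?thesis by simp
qed

lemma smooth_gcd_fraction_ge:
  assumes "B \<ge> 1" "r > 0"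
  shows "real (card {z \<in> {0..<r}. smooth B (gcd r z)}) / real r
           \<ge> 1 - real (card (large_power_primes B r)) / B"
proof -
  let ?bad = "{z \<in> {0..<r}. \<not> smooth B (gcd r z)}"
  have "{z \<in> {0..<r}. smooth B (gcd r z)} = {0..<r} - ?bad" by auto
  moreover have "card ({0..<r} - ?bad) = r - card ?bad"
    by (subst card_Diff_subset) auto
  moreover have "card ?bad \<le> r"
    using card_mono[of "{0..<r}" ?bad] by fastforce
  ultimately have "real (card {z \<in> {0..<r}. smooth B (gcd r z)}) = real r - real (card ?bad)"
    by simp
  moreover have "real (card ?bad) / real r \<le> real (card (large_power_primes B r)) / B"
    using card_not_smooth_gcd_le[OF assms] assms by (simp add: divide_simps mult.commute)
  ultimately show ?thesis using assms(2) by (simp add: diff_divide_distrib)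
qed

theorem lemma9:
  fixes r m :: nat and c :: real
  assumes "r \<ge> 2" and "m \<ge> 1" and "r < 2 ^ m" and "c \<ge> 1"
  shows "real (card {z \<in> {0..<r}. smooth (c * real m) (gcd r z)}) / real r
           \<ge> 1 - 1 / (c * log 2 (c * real m))"
proof -
  define B where "B = c * real m"
  let ?N = "card (large_power_primes B r)"
  have "m \<ge> 2" using assms by (cases "m = 1") auto
  then have "B \<ge> 2"
    using assms(4) mult_mono[of 1 c 2 "real m"] unfolding B_def by simp
  then have "B ^ ?N \<le> real r"
    using power_card_large_power_primes_le[of B r] assms(1) by simp
  also have "real r < 2 ^ m"
    using assms(3) by (metis of_nat_less_iff of_nat_numeral of_nat_power)
  finally have "log 2 (B ^ ?N) < log 2 (2 ^ m)"
    using \<open>B \<ge> 2\<close> by (subst log_less_cancel_iff) auto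
  then have "real ?N * log 2 B < real m"
    using \<open>B \<ge> 2\<close> by (simp add: log_nat_power)
  then have "real ?N / B \<le> 1 / (c * log 2 B)"
    using \<open>B \<ge> 2\<close> assms(4) \<open>m \<ge> 2\<close> unfolding B_def by (simp add: field_simps)
  then show ?thesis
    using smooth_gcd_fraction_ge[of B r] \<open>B \<ge> 2\<close> assms(1) unfolding B_def by simp
qed

end
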